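(* Let $p_{global}^{min}\in(0,1)$ satisfy $p_{global}^{min}\le\min_j p_j^{min}$, and suppose that for every node $\ell$, $$\frac{(N-1)(1-p_{global}^{min})^{N-2}}{e^{\rho_{\ell2}}(\alpha_\ell+1)}<1.$$ Then the game $\mathcal{G}$ has a unique Nash equilibrium $\mathbf{P}^{NE}$, and the best-response iteration $\mathbf{P}(t+1)=f^{br}(\mathbf{P}(t))$, started from any $\mathbf{P}(1)\in\prod_{\ell}[p_\ell^{min},1]$, converges to $\mathbf{P}^{NE}$.
   Context: Game $\mathcal{G}$: $N$ nodes (players); node $\ell$ has parameters $c_\ell>0$, $\rho_{\ell1}>0$, $\rho_{\ell2}>0$, $p_\ell^{min}\in(0,1)$, and $\alpha_\ell=c_\ell\rho_{\ell1}$. For $\mathbf{P}=(p_1,\dots,p_N)$, with $1/b_\ell:=e^{-\rho_{\ell2}}\prod_{k\neq\ell}(1-p_k)$, the virtual utility of node $\ell$ is $$U_\ell(p_\ell;\mathbf{P}_{-\ell})=-\frac{e^{-\alpha_\ell p_\ell}}{\alpha_\ell}-\frac{p_\ell^2}{2}\Big(1+\frac{1}{b_\ell}\Big)+\frac{1+\alpha_\ell}{\alpha_\ell}.$$ Node $\ell$'s action set is $[p_\ell^{min},1]$. The best-response map $f^{br}:\prod_\ell[p_\ell^{min},1]\to\prod_\ell[p_\ell^{min},1]$ has components $f^{br}(\mathbf{P})_\ell=\arg\max_{p\in[p_\ell^{min},1]}U_\ell(p;\mathbf{P}_{-\ell})$ (unique by strict concavity). A Nash equilibrium is a $\mathbf{P}^{NE}$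 with $f^{br}(\mathbf{P}^{NE})=\mathbf{P}^{NE}$. *)

theory Defs
  imports "HOL-Analysis.Analysis"
begin

text \<open>Nodes are 0..<N. A strategy profile is a function P :: nat \<Rightarrow> real,
  extensional (zero) outside {0..<N}.\<close>

definition alpha :: "(nat \<Rightarrow> real) \<Rightarrow> (nat \<Rightarrow> real) \<Rightarrow> nat \<Rightarrow> real" where
  "alpha c rho1 l = c l * rho1 l"

text \<open>inv_b = 1/b_l = exp(-rho_l2) * prod_{k \<noteq> l} (1 - p_k)\<close>
definition inv_b :: "nat \<Rightarrow> (nat \<Rightarrow> real) \<Rightarrow> (nat \<Rightarrow> real) \<Rightarrow> nat \<Rightarrow> real" where
  "inv_b N rho2 P l = exp (- rho2 l) * (\<Prod>k\<in>{0..<N} - {l}. (1 - P k))"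

definition utility :: "nat \<Rightarrow> (nat \<Rightarrow> real) \<Rightarrow> (nat \<Rightarrow> real) \<Rightarrow> (nat \<Rightarrow> real)
    \<Rightarrow> nat \<Rightarrow> real \<Rightarrow> (nat \<Rightarrow> real) \<Rightarrow> real" where
  "utility N c rho1 rho2 l p P =
     (let a = alpha c rho1 l in
      - exp (- a * p) / a - p\<^sup>2 / 2 * (1 + inv_b N rho2 P l) + (1 + a) / a)"

definition strategy_space :: "nat \<Rightarrow> (nat \<Rightarrow> real) \<Rightarrow> (nat \<Rightarrow> real) set" where
  "strategy_space N pmin = {P. (\<forall>l<N. pmin l \<le> P l \<and> P l \<le> 1) \<and> (\<forall>l\<ge>N. P l = 0)}"

text \<open>Best response: the (unique) maximiser over [pmin_l, 1]. U_l depends on P only via P_{-l}.\<close>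
definition best_response :: "nat \<Rightarrow> (nat \<Rightarrow> real) \<Rightarrow> (nat \<Rightarrow> real) \<Rightarrow> (nat \<Rightarrow> real)
    \<Rightarrow> (nat \<Rightarrow> real) \<Rightarrow> (nat \<Rightarrow> real) \<Rightarrow> (nat \<Rightarrow> real)" where
  "best_response N c rho1 rho2 pmin P = (\<lambda>l. if l < N then
      (THE p. p \<in> {pmin l..1} \<and>
         (\<forall>q\<in>{pmin l..1}. utility N c rho1 rho2 l q P \<le> utility N c rho1 rho2 l p P))
     else 0)"

definition nash_equilibrium :: "nat \<Rightarrow> (nat \<Rightarrow> real) \<Rightarrow> (nat \<Rightarrow> real) \<Rightarrow> (nat \<Rightarrow> real)
    \<Rightarrow> (nat \<Rightarrow> real) \<Rightarrow> (nat \<Rightarrow> real) \<Rightarrow> bool" where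
  "nash_equilibrium N c rho1 rho2 pmin P \<longleftrightarrow>
     P \<in> strategy_space N pmin \<and> best_response N c rho1 rho2 pmin P = P"

end

theory Submission
  imports Defs
begin

(* Node l's best response is the projection onto [pmin l, 1] of the unique zero r of its
   marginal utility exp (-alpha_l q) - q (1 + 1/b_l). Convexity of exp makes r a
   1/(1 + alpha_l)-Lipschitz function of 1/b_l, and 1/b_l = exp (-rho_l2) prod_{k ~= l} (1 - p_k)
   is exp (-rho_l2) (N - 1) (1 - pg)^(N - 2)-Lipschitz in the other probabilities for the
   sup-distance. The hypothesis thus makes the best-response map a contraction of the
   strategy space, and Banach's argument gives a unique fixed point attracting every
   best-response iteration. *)

lemma tendsto_fun_componentwise:
  fixes X :: "'b \<Rightarrow> 'a \<Rightarrow> 'c::topological_space"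
  shows "(X \<longlongrightarrow> L) F \<longleftrightarrow> (\<forall>i. ((\<lambda>t. X t i) \<longlongrightarrow> L i) F)"
proof -
  have "(X \<longlongrightarrow> L) F \<longleftrightarrow> limitin (product_topology (\<lambda>i. euclidean) UNIV) X L F"
    by (simp add: euclidean_product_topology)
  then show ?thesis
    by (simp add: limitin_componentwise)
qed

lemma LIMSEQ_geometric_bound:
  fixes X :: "nat \<Rightarrow> real"
  assumes bound: "\<And>t. \<bar>X t - c\<bar> \<le> k ^ t * D" and k: "0 \<le> k" "k < 1"
  shows "X \<longlonglongrightarrow> c"
proof -
  have "(\<lambda>t. k ^ t * D) \<longlonglongrightarrow> 0"
    using k by (intro tendsto_mult_left_zero LIMSEQ_power_zero) simp
  moreover have "\<forall>\<^sub>F t in sequentially. norm (X t - c) \<le> k ^ t * D"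
    using bound by (simp add: always_eventually)
  ultimately have "(\<lambda>t. X t - c) \<longlonglongrightarrow> 0"
    by (rule Lim_null_comparison[rotated])
  then show ?thesis
    by (rule Lim_null[THEN iffD2])
qed

lemma convergent_geometric_Cauchy:
  fixes X :: "nat \<Rightarrow> real"
  assumes bound: "\<And>m t. \<bar>X (m + t) - X t\<bar> \<le> k ^ t * D" and k: "0 \<le> k" "k < 1"
  shows "convergent X"
proof -
  have "Cauchy X"
  proof (rule metric_CauchyI)
    fix e :: real assume "0 < e"
    have "(\<lambda>t. k ^ t * D) \<longlonglongrightarrow> 0"
      using k by (intro tendsto_mult_left_zero LIMSEQ_power_zero) simp
    then obtain M where M: "\<And>t. t \<ge> M \<Longrightarrow> \<bar>k ^ t * D\<bar> < e"
      using \<open>0 < e\<close> unfolding LIMSEQ_iff by auto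
    have close: "dist (X m) (X n) < e" if "n \<le> m" "M \<le> n" for m n
    proof -
      have "\<bar>X m - X n\<bar> \<le> k ^ n * D"
        using bound[of "m - n" n] that(1) by simp
      then show ?thesis
        using M[OF that(2)] by (simp add: dist_real_def)
    qed
    show "\<exists>M. \<forall>m\<ge>M. \<forall>n\<ge>M. dist (X m) (X n) < e"
    proof (intro exI allI impI)
      fix m n assume "M \<le> m" "M \<le> n"
      show "dist (X m) (X n) < e"
      proof (cases "n \<le> m")
        case True
        then show ?thesis using close \<open>M \<le> n\<close> by blast
      next
        case False
        then show ?thesis using close[of m n] \<open>M \<le> m\<close> by (subst dist_commute) simp
      qed
    qed
  qed
  then show ?thesis
    by (rule Cauchy_convergent)
qed

lemma funpow_in_invariant:
  assumes "f ` S \<subseteq> S" "x \<in> S"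
  shows "(f ^^ n) x \<in> S"
  using assms by (induction n) auto

lemma iterate_distance_le:
  fixes f :: "('a \<Rightarrow> real) \<Rightarrow> ('a \<Rightarrow> real)"
  assumes invariant: "f ` S \<subseteq> S"
    and diameter: "\<And>P Q i. P \<in> S \<Longrightarrow> Q \<in> S \<Longrightarrow> \<bar>P i - Q i\<bar> \<le> D"
    and contraction: "\<And>P Q d i. P \<in> S \<Longrightarrow> Q \<in> S \<Longrightarrow> (\<And>j. \<bar>P j - Q j\<bar> \<le> d)
                         \<Longrightarrow> \<bar>f P i - f Q i\<bar> \<le> k * d"
    and "P \<in> S" "Q \<in> S"
  shows "\<bar>(f ^^ t) P i - (f ^^ t) Q i\<bar> \<le> k ^ t * D"
proof (induction t arbitrary: i)
  case 0
  then show ?case using diameter \<open>P \<in> S\<close> \<open>Q \<in> S\<close> by simp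
next
  case (Suc t)
  have "(f ^^ t) P \<in> S" "(f ^^ t) Q \<in> S"
    using invariant \<open>P \<in> S\<close> \<open>Q \<in> S\<close> by (simp_all add: funpow_in_invariant)
  then have "\<bar>f ((f ^^ t) P) i - f ((f ^^ t) Q) i\<bar> \<le> k * (k ^ t * D)"
    using Suc.IH by (intro contraction)
  then show ?case by simp
qed

text \<open>Profiles carry the product topology, not a metric, so the library's \<open>banach_fix\<close>
  does not apply; Banach's argument is redone for the sup-distance.\<close>

theorem contraction_unique_attracting_fixpoint:
  fixes f :: "('a \<Rightarrow> real) \<Rightarrow> ('a \<Rightarrow> real)"
  assumes "S \<noteq> {}" and invariant: "f ` S \<subseteq> S"
    and closed: "\<And>X L. (\<And>t. X t \<in> S) \<Longrightarrow> (\<And>i. (\<lambda>t. X t i) \<longlonglongrightarrow> L i) \<Longrightarrow> L \<in> S"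
    and diameter: "\<And>P Q i. P \<in> S \<Longrightarrow> Q \<in> S \<Longrightarrow> \<bar>P i - Q i\<bar> \<le> D"
    and contraction: "\<And>P Q d i. P \<in> S \<Longrightarrow> Q \<in> S \<Longrightarrow> (\<And>j. \<bar>P j - Q j\<bar> \<le> d)
                         \<Longrightarrow> \<bar>f P i - f Q i\<bar> \<le> k * d"
    and k: "0 \<le> k" "k < 1"
  shows "\<exists>!L. (L \<in> S \<and> f L = L) \<and> (\<forall>P\<in>S. (\<lambda>t. (f ^^ t) P) \<longlonglongrightarrow> L)"
proof -
  have iterate: "\<bar>(f ^^ t) P i - (f ^^ t) Q i\<bar> \<le> k ^ t * D" if "P \<in> S" "Q \<in> S" for P Q t i
    using invariant diameter contraction that by (rule iterate_distance_le)
  obtain P0 where "P0 \<in> S" using \<open>S \<noteq> {}\<close> by blast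
  define X where "X t = (f ^^ t) P0" for t
  have X_in: "X t \<in> S" for t
    unfolding X_def using invariant \<open>P0 \<in> S\<close> by (rule funpow_in_invariant)
  have X_shift: "\<bar>X (m + t) i - X t i\<bar> \<le> k ^ t * D" for m t i
  proof -
    have "X (m + t) = (f ^^ t) (X m)"
      unfolding X_def by (simp add: funpow_add add.commute[of m])
    then show ?thesis
      using iterate[OF X_in \<open>P0 \<in> S\<close>] unfolding X_def by simp
  qed
  define L where "L i = lim (\<lambda>t. X t i)" for i
  have X_lim: "(\<lambda>t. X t i) \<longlonglongrightarrow> L i" for i
    unfolding L_def using convergent_geometric_Cauchy[of "\<lambda>t. X t i", OF X_shift k]
    by (simp add: convergent_LIMSEQ_iff)
  have L_in: "L \<in> S"
    using X_in X_lim by (rule closed)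
  have X_dist: "\<bar>X t i - L i\<bar> \<le> k ^ t * D" for t i
  proof -
    have "(\<lambda>m. \<bar>X (m + t) i - X t i\<bar>) \<longlonglongrightarrow> \<bar>L i - X t i\<bar>"
      by (intro tendsto_intros LIMSEQ_ignore_initial_segment X_lim)
    then have "\<bar>L i - X t i\<bar> \<le> k ^ t * D"
      by (rule LIMSEQ_le_const2) (use X_shift in auto)
    then show ?thesis by (simp add: abs_minus_commute)
  qed
  have L_fixed: "f L = L"
  proof
    fix i
    have "\<bar>X (Suc t) i - f L i\<bar> \<le> k ^ t * (k * D)" for t
      using contraction[OF X_in L_in X_dist] by (simp add: X_def mult.left_commute)
    then have "(\<lambda>t. X (Suc t) i) \<longlonglongrightarrow> f L i"
      by (rule LIMSEQ_geometric_bound[OF _ k])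
    moreover have "(\<lambda>t. X (Suc t) i) \<longlonglongrightarrow> L i"
      by (rule LIMSEQ_Suc[OF X_lim])
    ultimately show "f L i = L i"
      by (rule LIMSEQ_unique)
  qed
  have L_fixed_iterate: "(f ^^ t) L = L" for t
    using L_fixed by (induction t) auto
  have attracting: "(\<lambda>t. (f ^^ t) P) \<longlonglongrightarrow> L" if "P \<in> S" for P
    unfolding tendsto_fun_componentwise
    using iterate[OF that L_in] L_fixed_iterate
    by (auto intro: LIMSEQ_geometric_bound[OF _ k])
  show ?thesis
  proof (rule ex1I[of _ L])
    fix L' assume "(L' \<in> S \<and> f L' = L') \<and> (\<forall>P\<in>S. (\<lambda>t. (f ^^ t) P) \<longlonglongrightarrow> L')"
    then have "(\<lambda>t. L) \<longlonglongrightarrow> L'"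
      using L_in L_fixed_iterate by auto
    then show "L' = L"
      unfolding tendsto_fun_componentwise by (simp add: LIMSEQ_const_iff fun_eq_iff)
  qed (use L_in L_fixed attracting in blast)
qed

lemma marginal_utility_strict_antimono:
  fixes a B x y :: real
  assumes "a > 0" "B \<ge> 0" "x < y"
  shows "exp (- a * y) - y * (1 + B) < exp (- a * x) - x * (1 + B)"
proof -
  have "exp (- a * y) < exp (- a * x)" using assms by simp
  moreover have "x * (1 + B) \<le> y * (1 + B)" using assms by (intro mult_right_mono) auto
  ultimately show ?thesis by linarith
qed

lemma marginal_utility_zero_antimono:
  fixes a B1 B2 r1 r2 :: real
  assumes "a > 0" "0 \<le> B1" "B1 \<le> B2"
    and r1: "exp (- a * r1) = r1 * (1 + B1)" and r2: "exp (- a * r2) = r2 * (1 + B2)"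
  shows "r2 \<le> r1"
proof (rule ccontr)
  assume "\<not> r2 \<le> r1"
  then have "exp (- a * r2) - r2 * (1 + B1) < exp (- a * r1) - r1 * (1 + B1)"
    using assms by (intro marginal_utility_strict_antimono) auto
  moreover have "0 < r2 * (1 + B2)"
    using r2 by (metis exp_gt_zero)
  then have "0 < r2"
    using assms by (simp add: zero_less_mult_iff)
  then have "r2 * (1 + B1) \<le> r2 * (1 + B2)"
    using assms by (intro mult_left_mono) auto
  ultimately show False using r1 r2 by linarith
qed

text \<open>The zero of the marginal utility \<open>exp (- a * q) - q * (1 + B)\<close>, i.e. the unconstrained
  maximiser of a node's utility with \<open>a = alpha c rho1 l\<close> and \<open>B = inv_b N rho2 P l\<close>.\<close>

definition stationary_point :: "real \<Rightarrow> real \<Rightarrow> real" where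
  "stationary_point a B = (THE r. exp (- a * r) = r * (1 + B))"

lemma stationary_point:
  fixes a B :: real
  assumes "a > 0" "B \<ge> 0"
  shows "exp (- a * stationary_point a B) = stationary_point a B * (1 + B)"
    and "0 < stationary_point a B" "stationary_point a B < 1"
proof -
  define g where "g q = exp (- a * q) - q * (1 + B)" for q
  have "exp (- a) < 1" using assms by simp
  then have "exp (- a) < 1 + B" using assms by linarith
  then have "g 1 < 0" "0 < g 0" unfolding g_def by simp_all
  moreover have "continuous_on {0..1} g" unfolding g_def by (intro continuous_intros)
  ultimately obtain r where r: "0 \<le> r" "r \<le> 1" "g r = 0"
    using IVT2'[of g 1 0 0] by force
  then have "r \<noteq> 0" "r \<noteq> 1" using \<open>g 1 < 0\<close> \<open>0 < g 0\<close> by auto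
  have root: "exp (- a * r) = r * (1 + B)" using r unfolding g_def by simp
  have "stationary_point a B = r"
    unfolding stationary_point_def
  proof (rule the_equality)
    fix r' assume "exp (- a * r') = r' * (1 + B)"
    then show "r' = r"
      using marginal_utility_zero_antimono[OF \<open>a > 0\<close> \<open>B \<ge> 0\<close> order_refl] root by (meson order_antisym)
  qed (rule root)
  then show "exp (- a * stationary_point a B) = stationary_point a B * (1 + B)"
    and "0 < stationary_point a B" "stationary_point a B < 1"
    using root r \<open>r \<noteq> 0\<close> \<open>r \<noteq> 1\<close> by auto
qed

lemma stationary_point_lipschitz_ordered:
  fixes a B1 B2 :: real
  assumes a: "a > 0" and B: "0 \<le> B1" "B1 \<le> B2"
  shows "stationary_point a B2 \<le> stationary_point a B1"
    and "stationary_point a B1 - stationary_point a B2 \<le> (B2 - B1) / (1 + a)"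
proof -
  define r1 r2 where "r1 = stationary_point a B1" and "r2 = stationary_point a B2"
  have r1: "exp (- a * r1) = r1 * (1 + B1)" "0 < r1" "r1 < 1"
    unfolding r1_def using stationary_point a B by auto
  have r2: "exp (- a * r2) = r2 * (1 + B2)"
    unfolding r2_def using stationary_point a B by auto
  show "r2 \<le> r1" using marginal_utility_zero_antimono[OF a B r1(1) r2] .
  have "exp (- a * r1) * (1 + a * (r1 - r2)) \<le> exp (- a * r1) * exp (a * (r1 - r2))"
    by (intro mult_left_mono exp_ge_add_one_self) auto
  also have "\<dots> = exp (- a * r2)"
    by (simp add: exp_add[symmetric] algebra_simps)
  finally have "r1 * (1 + B1) * (1 + a * (r1 - r2)) \<le> r2 * (1 + B2)"
    using r1 r2 by simp
  then have "(r1 - r2) * (1 + B2 + a * r1 * (1 + B1)) \<le> (B2 - B1) * r1"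
    by (simp add: algebra_simps)
  moreover have "(r1 - r2) * ((1 + a) * r1) \<le> (r1 - r2) * (1 + B2 + a * r1 * (1 + B1))"
  proof (rule mult_left_mono)
    have "0 \<le> a * r1 * B1" using r1 a B by simp
    then show "(1 + a) * r1 \<le> 1 + B2 + a * r1 * (1 + B1)"
      using r1(3) B by (simp add: algebra_simps)
  qed (use \<open>r2 \<le> r1\<close> in simp)
  ultimately have "(r1 - r2) * (1 + a) * r1 \<le> (B2 - B1) * r1"
    by (simp add: mult.assoc)
  then have "(r1 - r2) * (1 + a) \<le> B2 - B1"
    using r1(2) by (simp add: mult_le_cancel_right_pos)
  then show "r1 - r2 \<le> (B2 - B1) / (1 + a)"
    using a by (simp add: pos_le_divide_eq)
qed

lemma stationary_point_lipschitz:
  fixes a B1 B2 :: real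
  assumes "a > 0" "0 \<le> B1" "0 \<le> B2"
  shows "\<bar>stationary_point a B1 - stationary_point a B2\<bar> \<le> \<bar>B1 - B2\<bar> / (1 + a)"
proof (cases "B1 \<le> B2")
  case True
  then show ?thesis
    using stationary_point_lipschitz_ordered[of a B1 B2] assms by simp
next
  case False
  then show ?thesis
    using stationary_point_lipschitz_ordered[of a B2 B1] assms by simp
qed

lemma utility_strict_max:
  fixes a B lo q :: real
  assumes a: "a > 0" and B: "B \<ge> 0" and q: "lo \<le> q" "q \<noteq> max lo (stationary_point a B)"
  defines "u \<equiv> \<lambda>q. - exp (- a * q) / a - q\<^sup>2 / 2 * (1 + B) + (1 + a) / a"
  shows "u q < u (max lo (stationary_point a B))"
proof -
  define r where "r = stationary_point a B"
  define g where "g q = exp (- a * q) - q * (1 + B)" for q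
  have r: "g r = 0"
    unfolding g_def r_def using stationary_point(1)[OF a B] by simp
  have g_pos: "g x > 0" if "x < r" for x
    using marginal_utility_strict_antimono[OF a B that] r by (simp add: g_def)
  have g_neg: "g x < 0" if "r < x" for x
    using marginal_utility_strict_antimono[OF a B that] r by (simp add: g_def)
  have u_deriv: "(u has_real_derivative g x) (at x)" for x
    unfolding u_def g_def using a
    by (auto intro!: derivative_eq_intros simp: field_simps power2_eq_square)
  have u_cont: "continuous_on A u" for A
    unfolding u_def by (intro continuous_intros) (use a in auto)
  show ?thesis
  proof (cases "q < max lo r")
    case True
    then have "q < r" "max lo r = r" using q by (auto simp: r_def)
    have "u q < u r"
    proof (rule DERIV_pos_imp_increasing_open[OF \<open>q < r\<close> _ u_cont])
      fix x assume "x < r"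
      then show "\<exists>y. (u has_real_derivative y) (at x) \<and> y > 0"
        using u_deriv g_pos by blast
    qed
    then show ?thesis using \<open>max lo r = r\<close> by (simp add: r_def)
  next
    case False
    then have "max lo r < q" using q by (auto simp: r_def)
    have "u q < u (max lo r)"
    proof (rule DERIV_neg_imp_decreasing_open[OF \<open>max lo r < q\<close> _ u_cont])
      fix x assume "max lo r < x"
      then show "\<exists>y. (u has_real_derivative y) (at x) \<and> y < 0"
        using u_deriv g_neg by force
    qed
    then show ?thesis by (simp add: r_def)
  qed
qed

lemma utility_argmax:
  fixes a B lo :: real
  assumes a: "a > 0" and B: "B \<ge> 0" and lo: "lo \<le> 1"
  defines "u \<equiv> \<lambda>q. - exp (- a * q) / a - q\<^sup>2 / 2 * (1 + B) + (1 + a) / a"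
  shows "(THE p. p \<in> {lo..1} \<and> (\<forall>q\<in>{lo..1}. u q \<le> u p)) = max lo (stationary_point a B)"
proof -
  define m where "m = max lo (stationary_point a B)"
  have m_in: "m \<in> {lo..1}"
    using stationary_point[OF a B] lo by (auto simp: m_def)
  have strict: "u q < u m" if "q \<in> {lo..1}" "q \<noteq> m" for q
    using utility_strict_max[OF a B] that unfolding u_def m_def by auto
  show ?thesis
    unfolding m_def[symmetric]
  proof (rule the_equality)
    show "m \<in> {lo..1} \<and> (\<forall>q\<in>{lo..1}. u q \<le> u m)"
      using m_in strict by (metis order_refl order_less_imp_le)
  next
    fix p assume "p \<in> {lo..1} \<and> (\<forall>q\<in>{lo..1}. u q \<le> u p)"
    then show "p = m"
      using strict m_in by fastforce
  qed
qed

lemma abs_prod_diff_le: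
  fixes x y :: "'a \<Rightarrow> real"
  assumes x: "\<And>i. i \<in> I \<Longrightarrow> 0 \<le> x i \<and> x i \<le> M" and y: "\<And>i. i \<in> I \<Longrightarrow> 0 \<le> y i \<and> y i \<le> M"
    and "M > 0"
  shows "\<bar>prod x I - prod y I\<bar> \<le> M ^ (card I - 1) * (\<Sum>i\<in>I. \<bar>x i - y i\<bar>)"
proof (cases "finite I \<and> I \<noteq> {}")
  case False
  then show ?thesis by auto
next
  case True
  then have "card I \<ge> 1" by (simp add: Suc_le_eq card_gt_0_iff)
  have "\<bar>(\<Prod>i\<in>I. x i / M) - (\<Prod>i\<in>I. y i / M)\<bar> \<le> (\<Sum>i\<in>I. \<bar>x i / M - y i / M\<bar>)"
    using norm_prod_diff[of I "\<lambda>i. x i / M" "\<lambda>i. y i / M"] x y \<open>M > 0\<close> by simp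
  then have "\<bar>prod x I - prod y I\<bar> / M ^ card I \<le> (\<Sum>i\<in>I. \<bar>x i - y i\<bar>) / M"
    using \<open>M > 0\<close>
    by (simp add: prod_dividef diff_divide_distrib[symmetric] sum_divide_distrib[symmetric])
  then have "\<bar>prod x I - prod y I\<bar> \<le> M ^ card I / M * (\<Sum>i\<in>I. \<bar>x i - y i\<bar>)"
    using \<open>M > 0\<close> by (simp add: field_simps)
  also have "M ^ card I / M = M ^ (card I - 1)"
    using \<open>card I \<ge> 1\<close> \<open>M > 0\<close> by (simp add: power_diff)
  finally show ?thesis .
qed

lemma inv_b_nonneg:
  assumes "\<forall>k<N. P k \<le> 1"
  shows "0 \<le> inv_b N rho2 P l"
  unfolding inv_b_def using assms by (intro mult_nonneg_nonneg prod_nonneg) auto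

lemma inv_b_lipschitz:
  fixes pg d :: real
  assumes "l < N" "pg < 1"
    and P: "\<forall>k<N. pg \<le> P k \<and> P k \<le> 1" and Q: "\<forall>k<N. pg \<le> Q k \<and> Q k \<le> 1"
    and d: "\<forall>k<N. \<bar>P k - Q k\<bar> \<le> d"
  shows "\<bar>inv_b N rho2 P l - inv_b N rho2 Q l\<bar>
           \<le> exp (- rho2 l) * ((real N - 1) * (1 - pg) ^ (N - 2) * d)"
proof -
  define I where "I = {0..<N} - {l}"
  have card_I: "card I = N - 1" unfolding I_def using \<open>l < N\<close> by simp
  have "\<bar>(\<Prod>k\<in>I. 1 - P k) - (\<Prod>k\<in>I. 1 - Q k)\<bar> \<le> (1 - pg) ^ (card I - 1) * (\<Sum>k\<in>I. \<bar>P k - Q k\<bar>)"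
    using abs_prod_diff_le[of I "\<lambda>k. 1 - P k" "1 - pg" "\<lambda>k. 1 - Q k"] P Q \<open>pg < 1\<close>
    by (simp add: I_def abs_minus_commute)
  also have "(\<Sum>k\<in>I. \<bar>P k - Q k\<bar>) \<le> real (card I) * d"
    using d by (intro sum_bounded_above) (auto simp: I_def)
  finally have "\<bar>(\<Prod>k\<in>I. 1 - P k) - (\<Prod>k\<in>I. 1 - Q k)\<bar> \<le> (real N - 1) * (1 - pg) ^ (N - 2) * d"
    using \<open>pg < 1\<close> \<open>l < N\<close> by (simp add: card_I mult_left_mono mult_ac numeral_2_eq_2)
  then show ?thesis
    unfolding inv_b_def I_def[symmetric]
    by (simp add: abs_mult right_diff_distrib[symmetric] mult_left_mono)
qed

lemma best_response_eq:
  assumes "l < N" "alpha c rho1 l > 0" "pmin l \<le> 1" "\<forall>k<N. P k \<le> 1"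
  shows "best_response N c rho1 rho2 pmin P l
           = max (pmin l) (stationary_point (alpha c rho1 l) (inv_b N rho2 P l))"
  using utility_argmax[OF assms(2) inv_b_nonneg[OF assms(4)] assms(3)] assms(1)
  by (simp add: best_response_def utility_def Let_def)

lemma best_response_in_strategy_space:
  assumes "\<forall>l<N. alpha c rho1 l > 0" "\<forall>l<N. pmin l \<le> 1" "P \<in> strategy_space N pmin"
  shows "best_response N c rho1 rho2 pmin P \<in> strategy_space N pmin"
proof -
  have P: "\<forall>k<N. P k \<le> 1" using assms(3) by (simp add: strategy_space_def)
  have "pmin l \<le> best_response N c rho1 rho2 pmin P l \<and> best_response N c rho1 rho2 pmin P l \<le> 1"
    if "l < N" for l
  proof -
    have "stationary_point (alpha c rho1 l) (inv_b N rho2 P l) < 1"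
      using assms(1) that by (intro stationary_point(3) inv_b_nonneg[OF P]) auto
    then show ?thesis
      using best_response_eq[of l N c rho1 pmin P rho2] assms(1,2) P that by auto
  qed
  then show ?thesis
    by (simp add: strategy_space_def best_response_def)
qed

lemma best_response_lipschitz:
  fixes pg d :: real
  assumes "l < N" "alpha c rho1 l > 0" "pmin l \<le> 1" "pg < 1" "\<forall>j<N. pg \<le> pmin j"
    and "P \<in> strategy_space N pmin" "Q \<in> strategy_space N pmin" "\<forall>k<N. \<bar>P k - Q k\<bar> \<le> d"
  shows "\<bar>best_response N c rho1 rho2 pmin P l - best_response N c rho1 rho2 pmin Q l\<bar>
           \<le> (real N - 1) * (1 - pg) ^ (N - 2) / (exp (rho2 l) * (alpha c rho1 l + 1)) * d"
proof -
  define a where "a = alpha c rho1 l"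
  have "a > 0" using assms(2) by (simp add: a_def)
  have P: "\<forall>k<N. pg \<le> P k \<and> P k \<le> 1" and Q: "\<forall>k<N. pg \<le> Q k \<and> Q k \<le> 1"
    using assms(5-7) by (auto simp: strategy_space_def intro: order_trans)
  have "\<bar>best_response N c rho1 rho2 pmin P l - best_response N c rho1 rho2 pmin Q l\<bar>
      = \<bar>max (pmin l) (stationary_point a (inv_b N rho2 P l))
         - max (pmin l) (stationary_point a (inv_b N rho2 Q l))\<bar>"
    using best_response_eq[of l N c rho1 pmin, OF assms(1-3)] P Q by (simp add: a_def)
  also have "\<dots> \<le> \<bar>stationary_point a (inv_b N rho2 P l) - stationary_point a (inv_b N rho2 Q l)\<bar>"
    by (simp add: max_def abs_if)
  also have "\<dots> \<le> \<bar>inv_b N rho2 P l - inv_b N rho2 Q l\<bar> / (1 + a)"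
    using \<open>a > 0\<close> P Q by (intro stationary_point_lipschitz inv_b_nonneg) auto
  also have "\<dots> \<le> exp (- rho2 l) * ((real N - 1) * (1 - pg) ^ (N - 2) * d) / (1 + a)"
    using inv_b_lipschitz[OF assms(1,4) P Q assms(8)] \<open>a > 0\<close> by (intro divide_right_mono) auto
  also have "\<dots> = (real N - 1) * (1 - pg) ^ (N - 2) / (exp (rho2 l) * (a + 1)) * d"
    using \<open>a > 0\<close> by (simp add: exp_minus field_simps)
  finally show ?thesis
    unfolding a_def .
qed

lemma strategy_space_closed:
  assumes "\<And>t. X t \<in> strategy_space N pmin" "\<And>i. (\<lambda>t. X t i) \<longlonglongrightarrow> L i"
  shows "L \<in> strategy_space N pmin"
proof -
  have "pmin l \<le> L l \<and> L l \<le> 1" if "l < N" for l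
  proof
    show "pmin l \<le> L l"
      by (rule LIMSEQ_le_const[OF assms(2)]) (use assms(1) that in \<open>auto simp: strategy_space_def\<close>)
    show "L l \<le> 1"
      by (rule LIMSEQ_le_const2[OF assms(2)]) (use assms(1) that in \<open>auto simp: strategy_space_def\<close>)
  qed
  moreover have "L l = 0" if "l \<ge> N" for l
    using assms(2)[of l] assms(1) that by (simp add: strategy_space_def LIMSEQ_const_iff)
  ultimately show ?thesis
    by (simp add: strategy_space_def)
qed

lemma strategy_space_nonempty:
  assumes "\<forall>l<N. pmin l \<le> 1"
  shows "strategy_space N pmin \<noteq> {}"
proof -
  have "(\<lambda>l. if l < N then 1 else 0) \<in> strategy_space N pmin"
    using assms by (simp add: strategy_space_def)
  then show ?thesis by blast
qed

lemma strategy_space_diameter: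
  assumes "\<forall>l<N. 0 \<le> pmin l" "P \<in> strategy_space N pmin" "Q \<in> strategy_space N pmin"
  shows "\<bar>P i - Q i\<bar> \<le> 1"
proof (cases "i < N")
  case True
  then have "0 \<le> pmin i" "pmin i \<le> P i" "P i \<le> 1" "pmin i \<le> Q i" "Q i \<le> 1"
    using assms by (auto simp: strategy_space_def)
  then show ?thesis by linarith
qed (use assms in \<open>simp add: strategy_space_def\<close>)

lemma best_response_contraction:
  fixes pg k d :: real
  assumes "\<forall>l<N. alpha c rho1 l > 0" "\<forall>l<N. pmin l \<le> 1" "pg < 1" "\<forall>j<N. pg \<le> pmin j"
    and k: "0 \<le> k"
      "\<forall>l<N. (real N - 1) * (1 - pg) ^ (N - 2) / (exp (rho2 l) * (alpha c rho1 l + 1)) \<le> k"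
    and "P \<in> strategy_space N pmin" "Q \<in> strategy_space N pmin" "\<And>j. \<bar>P j - Q j\<bar> \<le> d"
  shows "\<bar>best_response N c rho1 rho2 pmin P l - best_response N c rho1 rho2 pmin Q l\<bar> \<le> k * d"
proof (cases "l < N")
  case True
  have "0 \<le> d" using assms(9)[of 0] by linarith
  have "\<bar>best_response N c rho1 rho2 pmin P l - best_response N c rho1 rho2 pmin Q l\<bar>
      \<le> (real N - 1) * (1 - pg) ^ (N - 2) / (exp (rho2 l) * (alpha c rho1 l + 1)) * d"
    using assms True by (intro best_response_lipschitz) auto
  also have "\<dots> \<le> k * d"
    using k True \<open>0 \<le> d\<close> by (intro mult_right_mono) auto
  finally show ?thesis .
next
  case False
  then show ?thesis
    using k(1) assms(9)[of l] by (simp add: best_response_def)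
qed

lemma uniform_bound_below_one:
  fixes K :: "nat \<Rightarrow> real"
  assumes "\<forall>l<N. K l < 1"
  obtains k where "0 \<le> k" "k < 1" "\<forall>l<N. K l \<le> k"
proof
  let ?k = "Max (insert 0 (K ` {..<N}))"
  show "0 \<le> ?k" "\<forall>l<N. K l \<le> ?k" "?k < 1"
    using assms by simp_all
qed

text \<open>For \<open>N = 1\<close> the exponent is negative, but the factor \<open>N - 1\<close> vanishes.\<close>

lemma powr_eq_power_diff_2:
  fixes x :: real
  assumes "x > 0" "N \<ge> 1"
  shows "(real N - 1) * x powr (real N - 2) = (real N - 1) * x ^ (N - 2)"
proof (cases "N = 1")
  case False
  then have "real N - 2 = real (N - 2)" using assms by simp
  then show ?thesis by (simp only: powr_realpow[OF assms(1)])
qed simp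

theorem theorem5:
  fixes N :: nat and c rho1 rho2 pmin :: "nat \<Rightarrow> real" and pg :: real
  assumes c_pos: "\<forall>l<N. c l > 0"
    and rho1_pos: "\<forall>l<N. rho1 l > 0"
    and rho2_pos: "\<forall>l<N. rho2 l > 0"
    and pmin_range: "\<forall>l<N. 0 < pmin l \<and> pmin l < 1"
    and pg_range: "0 < pg" "pg < 1"
    and pg_le: "\<forall>j<N. pg \<le> pmin j"
    and cond: "\<forall>l<N. (real N - 1) * (1 - pg) powr (real N - 2)
                       / (exp (rho2 l) * (alpha c rho1 l + 1)) < 1"
  shows "\<exists>!PNE. nash_equilibrium N c rho1 rho2 pmin PNE \<and>
           (\<forall>P1 \<in> strategy_space N pmin.
              (\<lambda>t. (best_response N c rho1 rho2 pmin ^^ t) P1) \<longlonglongrightarrow> PNE)"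
proof -
  let ?S = "strategy_space N pmin" and ?f = "best_response N c rho1 rho2 pmin"
  have alpha_pos: "\<forall>l<N. alpha c rho1 l > 0"
    using c_pos rho1_pos by (simp add: alpha_def)
  have pmin_nonneg: "\<forall>l<N. 0 \<le> pmin l" and pmin_le: "\<forall>l<N. pmin l \<le> 1"
    using pmin_range by (simp_all add: less_imp_le)
  have "\<forall>l<N. (real N - 1) * (1 - pg) ^ (N - 2) / (exp (rho2 l) * (alpha c rho1 l + 1)) < 1"
    using cond pg_range powr_eq_power_diff_2[of "1 - pg" N] by auto
  then obtain k where k: "0 \<le> k" "k < 1"
    and k_bound: "\<forall>l<N. (real N - 1) * (1 - pg) ^ (N - 2) / (exp (rho2 l) * (alpha c rho1 l + 1)) \<le> k"
    by (rule uniform_bound_below_one)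
  have "\<exists>!L. (L \<in> ?S \<and> ?f L = L) \<and> (\<forall>P\<in>?S. (\<lambda>t. (?f ^^ t) P) \<longlonglongrightarrow> L)"
  proof (rule contraction_unique_attracting_fixpoint[where D = 1, OF _ _ _ _ _ k])
    show "?S \<noteq> {}"
      using pmin_le by (rule strategy_space_nonempty)
    show "?f ` ?S \<subseteq> ?S"
      using alpha_pos pmin_le by (auto intro: best_response_in_strategy_space)
    show "L \<in> ?S" if "\<And>t. X t \<in> ?S" "\<And>i. (\<lambda>t. X t i) \<longlonglongrightarrow> L i" for X L
      using that by (rule strategy_space_closed)
    show "\<bar>P i - Q i\<bar> \<le> 1" if "P \<in> ?S" "Q \<in> ?S" for P Q i
      using pmin_nonneg that by (rule strategy_space_diameter)
    show "\<bar>?f P i - ?f Q i\<bar> \<le> k * d" if "P \<in> ?S" "Q \<in> ?S" "\<And>j. \<bar>P j - Q j\<bar> \<le> d" for P Q d i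
      using alpha_pos pmin_le pg_range(2) pg_le k(1) k_bound that by (rule best_response_contraction)
  qed
  then show ?thesis
    unfolding nash_equilibrium_def .
qed

end
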